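(* Let $n\ge1$ and $1\le p\le 2n$. Then the elements $y_0^l y_p$, $l=0,1,\dots,n-v_p$, form a $k$-basis of $\mathcal P^p(\mathcal O_n)$. (Here products are taken in the graded algebra $\mathcal P(\mathcal O_n)$.)
   Context: $k$ is a field of characteristic zero, $\mathcal O_n=k[x]/(x^{n+1})$, elements of $\mathcal O_n$ identified with multiplication operators, $\operatorname{ad}_x(\delta)=x\delta-\delta x$. The order filtration is $\mathcal D^p(\mathcal O_n)=\{\delta\in\operatorname{End}_k(\mathcal O_n):[f_0,[f_1,\dots,[f_p,\delta]\dots]]=0\ \forall f_i\in\mathcal O_n\}$ ($\mathcal D^{-1}=0$); $\mathcal P(\mathcal O_n)=\bigoplus_{p\ge0}\mathcal P^p(\mathcal O_n)$ with $\mathcal P^p(\mathcal O_n)=\mathcal D^p(\mathcal O_n)/\mathcal D^{p-1}(\mathcal O_n)$ is the associated graded commutative algebra. For $\delta\in\mathcal D^p(\mathcal O_n)$, $\operatorname{ad}_x^p(\delta)$ is multiplication by an element of $\mathcal O_n$ and $\operatorname{ad}_x^p:\mathcal D^p(\mathcal O_n)\to\mathcal O_n$ is $\mathcal O_n$-linear, so its image is an ideal $(x^{v_p})$ of $\mathcal O_n$; $v_p\in\{0,\dots,n\}$ denotes the corresponding exponent. For $1\le p\le 2n$, choose $\delta_p\in\mathcal D^p(\mathcal O_n)$ with $\frac{1}{p!}\operatorname{ad}_x^p(\delta_p)=x^{v_p}$, and let $y_p\in\mathcal P^p(\mathcal O_n)$ be its class (independent of the choice). Let $y_0\in\mathcal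 P^0(\mathcal O_n)$ be the class of (multiplication by) $x$. *)

theory Defs
  imports Main
begin

text \<open>Model of O_n = k[x]/(x^(n+1)) with basis 1, x, ..., x^n.
  An element of O_n is a coefficient function f :: nat => 'k vanishing above n.
  A k-linear endomorphism of O_n is its matrix M :: nat => nat => 'k
  (w.r.t. the monomial basis) vanishing outside {0..n} x {0..n}.\<close>

definition is_elem :: "nat \<Rightarrow> (nat \<Rightarrow> 'k::field) \<Rightarrow> bool" where
  "is_elem n f \<longleftrightarrow> (\<forall>i>n. f i = 0)"

definition is_endo :: "nat \<Rightarrow> (nat \<Rightarrow> nat \<Rightarrow> 'k::field) \<Rightarrow> bool" where
  "is_endo n M \<longleftrightarrow> (\<forall>i j. n < i \<or> n < j \<longrightarrow> M i j = 0)"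

definition mmul :: "nat \<Rightarrow> (nat \<Rightarrow> nat \<Rightarrow> 'k::field) \<Rightarrow> (nat \<Rightarrow> nat \<Rightarrow> 'k) \<Rightarrow> nat \<Rightarrow> nat \<Rightarrow> 'k" where
  "mmul n A B = (\<lambda>i j. \<Sum>t\<le>n. A i t * B t j)"

definition comm :: "nat \<Rightarrow> (nat \<Rightarrow> nat \<Rightarrow> 'k::field) \<Rightarrow> (nat \<Rightarrow> nat \<Rightarrow> 'k) \<Rightarrow> nat \<Rightarrow> nat \<Rightarrow> 'k" where
  "comm n A B = (\<lambda>i j. mmul n A B i j - mmul n B A i j)"

text \<open>Multiplication operator by f in O_n: (f g)_i = sum_{j<=i} f_(i-j) g_j (truncated at degree n).\<close>
definition mop :: "nat \<Rightarrow> (nat \<Rightarrow> 'k::field) \<Rightarrow> nat \<Rightarrow> nat \<Rightarrow> 'k" where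
  "mop n f = (\<lambda>i j. if j \<le> i \<and> i \<le> n then f (i - j) else 0)"

definition xpow :: "nat \<Rightarrow> nat \<Rightarrow> 'k::field" where
  "xpow v = (\<lambda>i. if i = v then 1 else 0)"

definition comm_list :: "nat \<Rightarrow> (nat \<Rightarrow> 'k::field) list \<Rightarrow> (nat \<Rightarrow> nat \<Rightarrow> 'k) \<Rightarrow> nat \<Rightarrow> nat \<Rightarrow> 'k" where
  "comm_list n fs d = foldr (\<lambda>f e. comm n (mop n f) e) fs d"

definition Dord :: "nat \<Rightarrow> nat \<Rightarrow> (nat \<Rightarrow> nat \<Rightarrow> 'k::field) set" where
  "Dord n p = {d. is_endo n d \<and>
     (\<forall>fs. length fs = Suc p \<and> (\<forall>f\<in>set fs. is_elem n f) \<longrightarrow> comm_list n fs d = (\<lambda>i j. 0))}"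

definition ad_x :: "nat \<Rightarrow> (nat \<Rightarrow> nat \<Rightarrow> 'k::field) \<Rightarrow> nat \<Rightarrow> nat \<Rightarrow> 'k" where
  "ad_x n d = comm n (mop n (xpow 1)) d"

text \<open>v_p: the exponent with ad_x^p(D^p) = (x^(v_p)), i.e. the least v such that
  multiplication by x^v lies in the image.\<close>
definition vp :: "nat \<Rightarrow> nat \<Rightarrow> 'k::field itself \<Rightarrow> nat" where
  "vp n p TYPE('k) = (LEAST v. mop n (xpow v) \<in> (ad_x n ^^ p) ` (Dord n p :: (nat \<Rightarrow> nat \<Rightarrow> 'k) set))"

end

(* For d in D^p the operator ad_x^(p+1) d vanishes, so ad_x^p d commutes with x and is therefore
   multiplication by an element of O_n; in particular D^(p-1) is the kernel of ad_x^p on D^p.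
   Since ad_x^p is O_n-linear, its image is an ideal, and minimality of v_p together with division
   by unit factors shows it is (x^(v_p)).  Hence ad_x^p / p! identifies P^p with the ideal (x^(v_p)),
   sending y_0^l y_p to x^(l + v_p), and these monomials for l <= n - v_p form a k-basis of it.
   That v_p <= n is witnessed by the matrix unit E_(0,n), an operator of order exactly 2n. *)

theory Submission
  imports Defs "HOL-Computational_Algebra.Formal_Power_Series"
begin

section \<open>Matrices and multiplication operators\<close>

lemma mmul_assoc: "mmul n (mmul n A B) C = mmul n A (mmul n B C)"
proof (intro ext)
  fix i j
  have "(\<Sum>t\<le>n. (\<Sum>s\<le>n. A i s * B s t) * C t j) = (\<Sum>t\<le>n. \<Sum>s\<le>n. A i s * B s t * C t j)"
    by (simp add: sum_distrib_right)
  also have "\<dots> = (\<Sum>s\<le>n. \<Sum>t\<le>n. A i s * B s t * C t j)"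
    by (rule sum.swap)
  also have "\<dots> = (\<Sum>s\<le>n. A i s * (\<Sum>t\<le>n. B s t * C t j))"
    by (simp add: sum_distrib_left mult.assoc)
  finally show "mmul n (mmul n A B) C i j = mmul n A (mmul n B C) i j"
    unfolding mmul_def .
qed

lemma mmul_diff_left: "mmul n (\<lambda>i j. A i j - B i j) C = (\<lambda>i j. mmul n A C i j - mmul n B C i j)"
  by (simp add: mmul_def algebra_simps sum_subtractf)

lemma mmul_diff_right: "mmul n C (\<lambda>i j. A i j - B i j) = (\<lambda>i j. mmul n C A i j - mmul n C B i j)"
  by (simp add: mmul_def algebra_simps sum_subtractf)

lemma mmul_zero_right: "mmul n C (\<lambda>i j. 0) = (\<lambda>i j. 0)"
  by (simp add: mmul_def)

lemma mmul_scale_right: "mmul n C (\<lambda>i j. c * A i j) = (\<lambda>i j. c * mmul n C A i j)"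
  by (simp add: mmul_def sum_distrib_left algebra_simps)

lemma is_endo_mmul: "is_endo n A \<Longrightarrow> is_endo n B \<Longrightarrow> is_endo n (mmul n A B)"
  by (auto simp: is_endo_def mmul_def intro!: sum.neutral)

lemma is_endo_mop: "is_endo n (mop n f)"
  by (simp add: is_endo_def mop_def)

lemma is_endo_comm: "is_endo n A \<Longrightarrow> is_endo n B \<Longrightarrow> is_endo n (comm n A B)"
  using is_endo_mmul[of n A B] is_endo_mmul[of n B A] by (simp add: is_endo_def comm_def)

lemma mmul_mop_mop: "mmul n (mop n f) (mop n g) = mop n (fps_nth (Abs_fps f * Abs_fps g))"
proof (intro ext)
  fix i j
  show "mmul n (mop n f) (mop n g) i j = mop n (fps_nth (Abs_fps f * Abs_fps g)) i j"
  proof (cases "j \<le> i \<and> i \<le> n")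
    case True
    have "mmul n (mop n f) (mop n g) i j = (\<Sum>t\<le>n. if t \<in> {j..i} then f (i - t) * g (t - j) else 0)"
      unfolding mmul_def mop_def using True by (intro sum.cong) auto
    also have "\<dots> = (\<Sum>t\<in>{j..i}. f (i - t) * g (t - j))"
      using True by (subst sum.inter_restrict[symmetric]) (auto intro!: sum.cong)
    also have "\<dots> = (\<Sum>s=0..i-j. f (i - (s + j)) * g (s + j - j))"
      using True sum.shift_bounds_cl_nat_ivl[of "\<lambda>t. f (i - t) * g (t - j)" 0 j "i - j"] by simp
    also have "\<dots> = (\<Sum>s=0..i-j. g s * f (i - j - s))"
      by (intro sum.cong refl) (simp add: mult.commute diff_diff_left add.commute)
    finally show ?thesis
      using True by (simp add: mop_def fps_mult_nth mult.commute[of "Abs_fps f"])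
  next
    case False
    then show ?thesis
      by (auto simp: mmul_def mop_def intro!: sum.neutral)
  qed
qed

lemma mmul_mop_commute: "mmul n (mop n f) (mop n g) = mmul n (mop n g) (mop n f)"
  by (simp add: mmul_mop_mop mult.commute)

lemma comm_mop_mop: "comm n (mop n f) (mop n g) = (\<lambda>i j. 0)"
  unfolding comm_def by (simp add: mmul_mop_commute)

lemma mmul_mop_xpow: "mmul n (mop n (xpow l)) (mop n (xpow v)) = (mop n (xpow (l + v)) :: nat \<Rightarrow> nat \<Rightarrow> 'k::field)"
proof -
  have Abs_fps_xpow: "Abs_fps (xpow k) = (fps_X ^ k :: 'k fps)" for k
    by (rule fps_ext) (simp add: xpow_def)
  have fps_nth_X_power: "fps_nth (fps_X ^ k :: 'k fps) = xpow k" for k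
    by (rule ext) (simp add: xpow_def)
  show ?thesis
    unfolding mmul_mop_mop Abs_fps_xpow power_add[symmetric] fps_nth_X_power ..
qed

section \<open>The operator ad_x\<close>

lemma ad_x_apply:
  "ad_x n A i j = (if 1 \<le> i \<and> i \<le> n then A (i - 1) j else 0) - (if j < n then A i (Suc j) else 0)"
proof -
  have x_mmul: "mmul n (mop n (xpow 1)) A i j = (if 1 \<le> i \<and> i \<le> n then A (i - 1) j else 0)"
  proof -
    have "mmul n (mop n (xpow 1)) A i j = (\<Sum>t\<le>n. if t = i - 1 then (if 1 \<le> i \<and> i \<le> n then A t j else 0) else 0)"
      unfolding mmul_def mop_def xpow_def by (intro sum.cong) auto
    then show ?thesis
      by (subst (asm) sum.delta) auto
  qed
  have mmul_x: "mmul n A (mop n (xpow 1)) i j = (if j < n then A i (Suc j) else 0)"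
  proof -
    have "mmul n A (mop n (xpow 1)) i j = (\<Sum>t\<le>n. if t = Suc j then (if j < n then A i t else 0) else 0)"
      unfolding mmul_def mop_def xpow_def by (intro sum.cong) auto
    then show ?thesis
      by (subst (asm) sum.delta) auto
  qed
  show ?thesis
    unfolding ad_x_def comm_def x_mmul mmul_x ..
qed

lemma ad_x_pow_diff:
  "(ad_x n ^^ m) (\<lambda>i j. A i j - B i j) = (\<lambda>i j. (ad_x n ^^ m) A i j - (ad_x n ^^ m) B i j)"
proof (induction m)
  case (Suc m)
  have "ad_x n (\<lambda>i j. C i j - D i j) = (\<lambda>i j. ad_x n C i j - ad_x n D i j)" for C D
    by (intro ext) (simp add: ad_x_apply)
  with Suc.IH show ?case
    by simp
qed simp

lemma ad_x_pow_scale: "(ad_x n ^^ m) (\<lambda>i j. c * A i j) = (\<lambda>i j. c * (ad_x n ^^ m) A i j)"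
proof (induction m)
  case (Suc m)
  have "ad_x n (\<lambda>i j. c * C i j) = (\<lambda>i j. c * ad_x n C i j)" for C
    by (intro ext) (simp add: ad_x_apply right_diff_distrib)
  with Suc.IH show ?case
    by simp
qed simp

lemma ad_x_pow_sum:
  "(ad_x n ^^ m) (\<lambda>i j. \<Sum>l\<in>S. c l * A l i j) = (\<lambda>i j. \<Sum>l\<in>S. c l * (ad_x n ^^ m) (A l) i j)"
proof (induction m)
  case (Suc m)
  have "ad_x n (\<lambda>i j. \<Sum>l\<in>S. c l * C l i j) = (\<lambda>i j. \<Sum>l\<in>S. c l * ad_x n (C l) i j)" for C
    by (intro ext, cases "1 \<le> i \<and> i \<le> n"; cases "j < n")
      (auto simp: ad_x_apply right_diff_distrib sum_subtractf)
  with Suc.IH show ?case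
    by simp
qed simp

lemma is_endo_ad_x_pow: "is_endo n A \<Longrightarrow> is_endo n ((ad_x n ^^ m) A)"
  by (induction m) (simp_all add: ad_x_def is_endo_comm is_endo_mop)

lemma comm_mop_comm_mop:
  "comm n (mop n f) (comm n (mop n g) A) = comm n (mop n g) (comm n (mop n f) A)"
proof -
  have "mmul n (mop n f) (mmul n (mop n g) A) = mmul n (mop n g) (mmul n (mop n f) A)"
    by (metis mmul_assoc mmul_mop_commute)
  moreover have "mmul n A (mmul n (mop n g) (mop n f)) = mmul n A (mmul n (mop n f) (mop n g))"
    by (metis mmul_mop_commute)
  ultimately show ?thesis
    unfolding comm_def mmul_diff_left mmul_diff_right mmul_assoc by (simp add: algebra_simps)
qed

lemma ad_x_pow_comm_mop:
  "(ad_x n ^^ m) (comm n (mop n f) A) = comm n (mop n f) ((ad_x n ^^ m) A)"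
  by (induction m) (simp_all add: ad_x_def comm_mop_comm_mop)

lemma ad_x_pow_mmul_mop:
  "(ad_x n ^^ m) (mmul n (mop n f) A) = mmul n (mop n f) ((ad_x n ^^ m) A)"
proof (induction m)
  case (Suc m)
  have "ad_x n (mmul n (mop n f) B) = mmul n (mop n f) (ad_x n B)" for B
  proof -
    have "mmul n (mop n (xpow 1)) (mmul n (mop n f) B) = mmul n (mop n f) (mmul n (mop n (xpow 1)) B)"
      by (metis mmul_assoc mmul_mop_commute)
    then show ?thesis
      unfolding ad_x_def comm_def mmul_diff_right mmul_assoc by simp
  qed
  with Suc.IH show ?case
    by simp
qed simp

lemma ad_x_eq_zero_imp_eq_mop:
  assumes endo: "is_endo n e" and commutes: "ad_x n e = (\<lambda>i j. 0)"
  shows "e = mop n (\<lambda>i. e i 0)"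
proof -
  have shift: "(if 1 \<le> i \<and> i \<le> n then e (i - 1) j else 0) = (if j < n then e i (Suc j) else 0)" for i j
    using fun_cong[OF fun_cong[OF commutes], of i j] by (simp add: ad_x_apply)
  have "e i j = mop n (\<lambda>i. e i 0) i j" for i j
  proof (induction j arbitrary: i)
    case 0
    show ?case
      using endo by (simp add: mop_def is_endo_def)
  next
    case (Suc j)
    show ?case
    proof (cases "j < n")
      case True
      then show ?thesis
        using shift[of i j] Suc.IH[of "i - 1"] by (cases i) (auto simp: mop_def)
    next
      case False
      then show ?thesis
        using endo by (auto simp: mop_def is_endo_def)
    qed
  qed
  then show ?thesis
    by (intro ext)
qed

section \<open>The order filtration\<close>

lemma comm_list_replicate: "comm_list n (replicate m f) d = (comm n (mop n f) ^^ m) d"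
  by (induction m) (simp_all add: comm_list_def)

lemma is_endo_comm_list: "is_endo n d \<Longrightarrow> is_endo n (comm_list n fs d)"
  by (induction fs) (simp_all add: comm_list_def is_endo_comm is_endo_mop)

lemma ad_x_pow_comm_list_eq_zero:
  assumes "is_endo n d" and "(ad_x n ^^ (k + length fs)) d = (\<lambda>i j. 0)"
  shows "(ad_x n ^^ k) (comm_list n fs d) = (\<lambda>i j. 0)"
  using assms(2)
proof (induction fs arbitrary: k)
  case Nil
  then show ?case
    by (simp add: comm_list_def)
next
  case (Cons f fs)
  let ?e = "(ad_x n ^^ k) (comm_list n fs d)"
  have "ad_x n ?e = (\<lambda>i j. 0)"
    using Cons.IH[of "Suc k"] Cons.prems by simp
  then have "?e = mop n (\<lambda>i. ?e i 0)"
    by (intro ad_x_eq_zero_imp_eq_mop is_endo_ad_x_pow is_endo_comm_list assms(1))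
  have "(ad_x n ^^ k) (comm_list n (f # fs) d) = comm n (mop n f) ?e"
    by (simp add: comm_list_def ad_x_pow_comm_mop)
  also have "\<dots> = comm n (mop n f) (mop n (\<lambda>i. ?e i 0))"
    using \<open>?e = mop n (\<lambda>i. ?e i 0)\<close> by (rule arg_cong)
  finally show ?case
    by (simp only: comm_mop_mop)
qed

lemma Dord_iff:
  assumes "1 \<le> n"
  shows "d \<in> Dord n q \<longleftrightarrow> is_endo n d \<and> (ad_x n ^^ Suc q) d = (\<lambda>i j. 0)"
proof
  assume d: "d \<in> Dord n q"
  have "ad_x n = comm n (mop n (xpow 1))"
    by (rule ext) (simp only: ad_x_def)
  then have "(ad_x n ^^ Suc q) d = comm_list n (replicate (Suc q) (xpow 1)) d"
    by (metis comm_list_replicate)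
  also have "\<dots> = (\<lambda>i j. 0)"
    using d assms unfolding Dord_def by (auto simp: is_elem_def xpow_def)
  finally show "is_endo n d \<and> (ad_x n ^^ Suc q) d = (\<lambda>i j. 0)"
    using d unfolding Dord_def by simp
next
  assume "is_endo n d \<and> (ad_x n ^^ Suc q) d = (\<lambda>i j. 0)"
  then show "d \<in> Dord n q"
    unfolding Dord_def using ad_x_pow_comm_list_eq_zero[of n d 0] by auto
qed

lemma Dord_pred_iff:
  assumes "1 \<le> n" and "1 \<le> p"
  shows "d \<in> Dord n (p - 1) \<longleftrightarrow> is_endo n d \<and> (ad_x n ^^ p) d = (\<lambda>i j. 0)"
  using Dord_iff[OF assms(1), of d "p - 1"] assms(2) by simp

lemma mmul_mop_in_Dord:
  assumes "1 \<le> n" and "A \<in> Dord n q"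
  shows "mmul n (mop n f) A \<in> Dord n q"
  using assms(2) unfolding Dord_iff[OF assms(1)] ad_x_pow_mmul_mop
  by (simp add: mmul_zero_right is_endo_mmul is_endo_mop)

section \<open>The exponent v_p\<close>

definition corner_unit :: "nat \<Rightarrow> nat \<Rightarrow> nat \<Rightarrow> 'k::field" where
  "corner_unit n = (\<lambda>i j. if i = 0 \<and> j = n then 1 else 0)"

lemma ad_x_pow_corner_unit:
  "(ad_x n ^^ m) (corner_unit n) i j =
     (if i \<le> n \<and> j \<le> n \<and> i + n = m + j then (-1) ^ (n - j) * of_nat (m choose i) else (0::'k::field))"
proof (induction m arbitrary: i j)
  case 0
  show ?case
    by (auto simp: corner_unit_def)
next
  case (Suc m)
  have sign: "(-1::'k) ^ (n - j) = - ((-1) ^ (n - Suc j))" if "j < n"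
    using that by (simp add: Suc_diff_Suc[symmetric])
  show ?case
    unfolding funpow.simps(2) o_apply ad_x_apply[of n "(ad_x n ^^ m) (corner_unit n)"] Suc.IH
    by (cases i) (auto simp: sign algebra_simps binomial_eq_0)
qed

lemma vp_le:
  assumes "1 \<le> n" and "p \<le> 2 * n"
  shows "vp n p TYPE('k::field_char_0) \<le> n"
proof -
  define c :: 'k where "c = (-1) ^ n * of_nat (2 * n choose n)"
  define d :: "nat \<Rightarrow> nat \<Rightarrow> 'k" where
    "d = (\<lambda>i j. inverse c * (ad_x n ^^ (2 * n - p)) (corner_unit n) i j)"
  have "c \<noteq> 0"
    by (simp add: c_def)
  have ad_x_pow_d: "(ad_x n ^^ k) d = (\<lambda>i j. inverse c * (ad_x n ^^ (k + (2 * n - p))) (corner_unit n) i j)" for k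
    unfolding d_def ad_x_pow_scale funpow_add by simp
  have "is_endo n d"
    using is_endo_ad_x_pow[of n "corner_unit n" "2 * n - p"]
    by (auto simp: d_def is_endo_def corner_unit_def)
  moreover have "(ad_x n ^^ Suc p) d = (\<lambda>i j. 0)"
    unfolding ad_x_pow_d using assms(2) by (intro ext) (auto simp: ad_x_pow_corner_unit simp del: funpow.simps)
  ultimately have "d \<in> Dord n p"
    using Dord_iff[OF assms(1)] by blast
  moreover have "(ad_x n ^^ p) d i j = mop n (xpow n) i j" for i j
  proof (cases "i = n \<and> j = 0")
    case True
    then show ?thesis
      using assms(2) \<open>c \<noteq> 0\<close> unfolding ad_x_pow_d
      by (simp add: ad_x_pow_corner_unit mop_def xpow_def flip: c_def del: funpow.simps)
  next
    case False
    then show ?thesis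
      using assms(2) unfolding ad_x_pow_d
      by (auto simp: ad_x_pow_corner_unit mop_def xpow_def simp del: funpow.simps)
  qed
  ultimately have "mop n (xpow n) \<in> (ad_x n ^^ p) ` (Dord n p :: (nat \<Rightarrow> nat \<Rightarrow> 'k) set)"
    by (metis image_eqI ext)
  then show ?thesis
    unfolding vp_def by (rule Least_le)
qed

lemma ad_x_pow_Dord_eq_mop:
  assumes "1 \<le> n" and "d \<in> Dord n p"
  shows "(ad_x n ^^ p) d = mop n (\<lambda>i. (ad_x n ^^ p) d i 0)"
  using assms by (intro ad_x_eq_zero_imp_eq_mop is_endo_ad_x_pow) (simp_all add: Dord_iff)

lemma ad_x_pow_Dord_vanishes_below_vp:
  fixes d :: "nat \<Rightarrow> nat \<Rightarrow> 'k::field"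
  assumes "1 \<le> n" and "d \<in> Dord n p" and "w < vp n p TYPE('k)"
  shows "(ad_x n ^^ p) d w 0 = 0"
proof (rule ccontr)
  define H where "H = Abs_fps (\<lambda>i. (ad_x n ^^ p) d i 0)"
  define s where "s = subdegree H"
  define g where "g = inverse (unit_factor H)"
  assume "(ad_x n ^^ p) d w 0 \<noteq> 0"
  then have "fps_nth H w \<noteq> 0"
    by (simp add: H_def)
  then have "H \<noteq> 0" and "s \<le> w"
    by (auto simp: s_def intro: subdegree_leI)
  have "g * unit_factor H = 1"
    unfolding g_def using fps_unit_factor_nth_0[OF \<open>H \<noteq> 0\<close>] by (rule inverse_mult_eq_1)
  then have "g * H = fps_X ^ s"
    using fps_unit_factor_decompose'[of H] unfolding s_def
    by (metis mult.left_commute mult_1_right)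
  have column: "(ad_x n ^^ p) d = mop n (fps_nth H)"
    unfolding H_def Abs_fps_inverse[OF CollectI, OF TrueI] by (rule ad_x_pow_Dord_eq_mop[OF assms(1,2)])
  have "(ad_x n ^^ p) (mmul n (mop n (fps_nth g)) d) = mop n (fps_nth (fps_X ^ s))"
    unfolding ad_x_pow_mmul_mop column mmul_mop_mop fps_nth_inverse \<open>g * H = fps_X ^ s\<close> ..
  also have "fps_nth (fps_X ^ s) = xpow s"
    by (rule ext) (simp add: xpow_def)
  finally have "(ad_x n ^^ p) (mmul n (mop n (fps_nth g)) d) = mop n (xpow s)" .
  moreover have "mmul n (mop n (fps_nth g)) d \<in> Dord n p"
    by (rule mmul_mop_in_Dord[OF assms(1,2)])
  ultimately have "mop n (xpow s) \<in> (ad_x n ^^ p) ` (Dord n p :: (nat \<Rightarrow> nat \<Rightarrow> 'k) set)"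
    by (metis image_eqI)
  then have "vp n p TYPE('k) \<le> s"
    unfolding vp_def by (rule Least_le)
  with \<open>s \<le> w\<close> assms(3) show False
    by simp
qed

section \<open>A basis of P^p\<close>

lemma mop_eq_sum_xpow:
  assumes "\<forall>w<v. h w = 0"
  shows "mop n h = (\<lambda>i j. \<Sum>l\<le>n - v. h (l + v) * mop n (xpow (l + v)) i j)"
proof (intro ext)
  fix i j
  show "mop n h i j = (\<Sum>l\<le>n - v. h (l + v) * mop n (xpow (l + v)) i j)"
  proof (cases "j \<le> i \<and> i \<le> n")
    case True
    then have "(\<Sum>l\<le>n - v. h (l + v) * mop n (xpow (l + v)) i j) =
        (\<Sum>l\<le>n - v. if l = i - j - v then (if v \<le> i - j then h (i - j) else 0) else 0)"
      by (intro sum.cong) (auto simp: mop_def xpow_def)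
    also have "\<dots> = mop n h i j"
      using True assms by (subst sum.delta) (auto simp: mop_def)
    finally show ?thesis
      by simp
  next
    case False
    then show ?thesis
      unfolding mop_def if_not_P[OF False] by simp
  qed
qed

lemma ad_x_pow_sum_mmul_xpow:
  assumes "(ad_x n ^^ p) dp = (\<lambda>i j. a * mop n (xpow v) i j)"
  shows "(ad_x n ^^ p) (\<lambda>i j. \<Sum>l\<in>S. c l * mmul n (mop n (xpow l)) dp i j) =
    (\<lambda>i j. \<Sum>l\<in>S. c l * a * mop n (xpow (l + v)) i j)"
  unfolding ad_x_pow_sum ad_x_pow_mmul_mop assms mmul_scale_right mmul_mop_xpow
  by (simp add: mult.assoc)

lemma sum_mmul_xpow_in_Dord_pred_imp_zero:
  assumes "1 \<le> n" and "1 \<le> p" and "v \<le> n" and "a \<noteq> 0"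
    and normalized: "(ad_x n ^^ p) dp = (\<lambda>i j. a * mop n (xpow v) i j)"
    and "(\<lambda>i j. \<Sum>l\<le>n - v. c l * mmul n (mop n (xpow l)) dp i j) \<in> Dord n (p - 1)"
    and "l0 \<le> n - v"
  shows "c l0 = 0"
proof -
  have "(\<lambda>i j. \<Sum>l\<le>n - v. c l * a * mop n (xpow (l + v)) i j) = (\<lambda>i j. 0)"
    using assms(6) unfolding Dord_pred_iff[OF assms(1,2)] ad_x_pow_sum_mmul_xpow[OF normalized]
    by simp
  then have "(\<Sum>l\<le>n - v. c l * a * mop n (xpow (l + v)) (l0 + v) 0) = 0"
    using fun_cong[OF fun_cong, of _ _ "l0 + v" 0] by blast
  moreover have "(\<Sum>l\<le>n - v. c l * a * mop n (xpow (l + v)) (l0 + v) 0) =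
      (\<Sum>l\<le>n - v. if l = l0 then c l * a else 0)"
    using assms(3) by (intro sum.cong) (auto simp: mop_def xpow_def)
  moreover have "\<dots> = c l0 * a"
    using assms(7) by (subst sum.delta) auto
  ultimately show ?thesis
    using \<open>a \<noteq> 0\<close> by simp
qed

lemma Dord_mod_Dord_pred_spanned:
  assumes "1 \<le> n" and "1 \<le> p" and "a \<noteq> 0"
    and normalized: "(ad_x n ^^ p) dp = (\<lambda>i j. a * mop n (xpow v) i j)"
    and "is_endo n dp" and "d \<in> Dord n p" and vanishes: "\<forall>w<v. (ad_x n ^^ p) d w 0 = 0"
  shows "\<exists>c. (\<lambda>i j. d i j - (\<Sum>l\<le>n - v. c l * mmul n (mop n (xpow l)) dp i j)) \<in> Dord n (p - 1)"
proof -
  define h where "h = (\<lambda>i. (ad_x n ^^ p) d i 0)"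
  define c where "c = (\<lambda>l. h (l + v) / a)"
  let ?r = "\<lambda>i j. d i j - (\<Sum>l\<le>n - v. c l * mmul n (mop n (xpow l)) dp i j)"
  have "is_endo n ?r"
    using assms(5,6) is_endo_mmul[OF is_endo_mop assms(5)] by (simp add: Dord_iff[OF assms(1)] is_endo_def)
  moreover have "(ad_x n ^^ p) ?r = (\<lambda>i j. 0)"
  proof -
    have "(ad_x n ^^ p) d = mop n h"
      unfolding h_def by (rule ad_x_pow_Dord_eq_mop[OF assms(1,6)])
    also have "\<dots> = (\<lambda>i j. \<Sum>l\<le>n - v. h (l + v) * mop n (xpow (l + v)) i j)"
      using vanishes unfolding h_def by (rule mop_eq_sum_xpow)
    also have "\<dots> = (\<lambda>i j. \<Sum>l\<le>n - v. c l * a * mop n (xpow (l + v)) i j)"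
      using \<open>a \<noteq> 0\<close> by (simp add: c_def)
    finally show ?thesis
      unfolding ad_x_pow_diff ad_x_pow_sum_mmul_xpow[OF normalized] by simp
  qed
  ultimately show ?thesis
    using Dord_pred_iff[OF assms(1,2)] by blast
qed

theorem lemma4:
  fixes n p :: nat and dp :: "nat \<Rightarrow> nat \<Rightarrow> 'k::field_char_0"
  assumes "1 \<le> n" and "1 \<le> p" and "p \<le> 2 * n"
    and "dp \<in> Dord n p"
    and "(\<lambda>i j. (ad_x n ^^ p) dp i j / of_nat (fact p)) = mop n (xpow (vp n p TYPE('k)))"
  shows "(\<forall>l \<le> n - vp n p TYPE('k). mmul n (mop n (xpow l)) dp \<in> Dord n p)
    \<and> (\<forall>c :: nat \<Rightarrow> 'k.
          (\<lambda>i j. \<Sum>l\<le>n - vp n p TYPE('k). c l * mmul n (mop n (xpow l)) dp i j) \<in> Dord n (p - 1)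
          \<longrightarrow> (\<forall>l \<le> n - vp n p TYPE('k). c l = 0))
    \<and> (\<forall>d \<in> Dord n p. \<exists>c :: nat \<Rightarrow> 'k.
          (\<lambda>i j. d i j - (\<Sum>l\<le>n - vp n p TYPE('k). c l * mmul n (mop n (xpow l)) dp i j)) \<in> Dord n (p - 1))"
proof -
  define v where "v = vp n p TYPE('k)"
  have "v \<le> n"
    unfolding v_def using assms(1,3) by (rule vp_le)
  have "is_endo n dp"
    using assms(4) Dord_iff[OF assms(1)] by blast
  have normalized: "(ad_x n ^^ p) dp = (\<lambda>i j. of_nat (fact p) * mop n (xpow v) i j)"
  proof (intro ext)
    fix i j
    show "(ad_x n ^^ p) dp i j = of_nat (fact p) * mop n (xpow v) i j"
      using fun_cong[OF fun_cong[OF assms(5)], of i j] unfolding v_def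
      by (simp add: field_simps)
  qed
  have fact_nonzero: "(of_nat (fact p) :: 'k) \<noteq> 0"
    by simp
  note independent = sum_mmul_xpow_in_Dord_pred_imp_zero[OF assms(1,2) \<open>v \<le> n\<close> fact_nonzero normalized]
  note spanning = Dord_mod_Dord_pred_spanned[OF assms(1,2) fact_nonzero normalized \<open>is_endo n dp\<close>]
  have "\<forall>w<v. (ad_x n ^^ p) d w 0 = 0" if "d \<in> Dord n p" for d :: "nat \<Rightarrow> nat \<Rightarrow> 'k"
    using ad_x_pow_Dord_vanishes_below_vp[OF assms(1) that] unfolding v_def by blast
  then show ?thesis
    unfolding v_def[symmetric] using mmul_mop_in_Dord[OF assms(1,4)] independent spanning
    by blast
qed

end
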